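(* The growth rate of ternary square-free words satisfies \[ s\ge 65^{1/40}>1.109999. \] Equivalently, the number of square-free ternary words of length $n$ grows at least like $65^{n/40}$.
   Context: Let $\Sigma=\{0,1,2\}$. A word over $\Sigma$ is square-free if it cannot be written as $xyyz$ with $y$ nonempty. $a(n)$ is the number of square-free words of length $n$ over $\Sigma$, and $s=\lim_{n\to\infty}a(n)^{1/n}$ (this limit exists). *)

theory Defs
  imports "HOL-Analysis.Analysis"
begin

definition square_free :: "'a list \<Rightarrow> bool" where
  "square_free w \<longleftrightarrow> \<not> (\<exists>x y z. y \<noteq> [] \<and> w = x @ y @ y @ z)"

definition sqfree_count :: "nat \<Rightarrow> nat" where
  "sqfree_count n = card {w :: nat list. length w = n \<and> set w \<subseteq> {0,1,2} \<and> square_free w}"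

definition growth_rate :: real where
  "growth_rate = lim (\<lambda>n. real (sqfree_count n) powr (1 / real n))"

end

theory Submission
  imports Defs
begin

text \<open>
  The bound comes from a block code: 25 square-free ternary blocks of length 29, all starting
  with the marker 01202 and containing it nowhere else, together with a successor graph of
  out-degree 21 on them. In the concatenation of blocks along a walk the marker synchronises
  the decoding, so every square has a period of j blocks, and squares inside two consecutive
  blocks are excluded by a finite check. Call a walk good if its concatenation is square-free.
  Appending a successor to a good walk of n blocks either yields a good walk or creates a
  square of period j \<ge> 2 blocks ending in the new block. The extended walk then repeats its
  last j - 1 blocks, so it is determined by its good prefix of n + 1 - j blocks and by the new
  block, which shares a long prefix with the block it repeats and is therefore one of at most
  6 candidates. Hence the numbers c(n) of good walks satisfy
  c(n+1) \<ge> 21 c(n) - 6 (c(n-1) + ... + c(1)), which gives c(n+1) \<ge> \<beta> c(n) for \<beta> = 20.65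
  because \<beta> \<le> 21 - 6/(\<beta> - 1). Thus a(29 n) \<ge> \<beta>^n, and since a is submultiplicative,
  Fekete's lemma yields s \<ge> \<beta>^(1/29) \<ge> 65^(1/40).
\<close>

section \<open>Squares in words\<close>

lemma last_eq_nth: "length w = Suc k \<Longrightarrow> last w = w!k"
  by (cases w rule: rev_cases) (auto simp: nth_append)

lemma take_drop_Suc_eq: "k < length w \<Longrightarrow> take (Suc j) (drop k w) = w!k # take j (drop (Suc k) w)"
  by (metis Cons_nth_drop_Suc take_Suc_Cons)

definition square_at :: "'a list \<Rightarrow> nat \<Rightarrow> nat \<Rightarrow> bool" where
  "square_at xs p l \<longleftrightarrow> 0 < l \<and> p + 2*l \<le> length xs \<and> (\<forall>t<l. xs!(p+t) = xs!(p+l+t))"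

lemma square_free_iff_no_square_at: "square_free xs \<longleftrightarrow> (\<nexists>p l. square_at xs p l)"
proof
  assume "square_free xs"
  show "\<nexists>p l. square_at xs p l"
  proof
    assume "\<exists>p l. square_at xs p l"
    then obtain p l where l: "0 < l" "p + 2*l \<le> length xs" and eq: "\<forall>t<l. xs!(p+t) = xs!(p+l+t)"
      by (auto simp: square_at_def)
    define y where "y = take l (drop p xs)"
    have "take l (drop (p+l) xs) = y"
      unfolding y_def by (rule nth_equalityI) (use l eq in \<open>auto simp: add.commute add.left_commute\<close>)
    then have "xs = take p xs @ y @ y @ drop (p+l+l) xs"
      unfolding y_def by (metis append_take_drop_id drop_drop add.commute)
    moreover have "y \<noteq> []" unfolding y_def using l by auto
    ultimately show False using \<open>square_free xs\<close> unfolding square_free_def by blast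
  qed
next
  assume no_square: "\<nexists>p l. square_at xs p l"
  show "square_free xs"
    unfolding square_free_def
  proof
    assume "\<exists>x y z. y \<noteq> [] \<and> xs = x @ y @ y @ z"
    then obtain x y z where "y \<noteq> []" "xs = x @ y @ y @ z" by blast
    then have "square_at xs (length x) (length y)"
      unfolding square_at_def by (auto simp: nth_append)
    then show False using no_square by blast
  qed
qed

lemma square_at_nth:
  assumes "square_at xs p l" "p \<le> i" "i < p + l"
  shows "xs!i = xs!(i+l)"
proof -
  have "i - p < l" using assms(2,3) by simp
  then have "xs!(p + (i-p)) = xs!(p + l + (i-p))"
    using assms(1) unfolding square_at_def by blast
  then show ?thesis using assms(2) by (simp add: add.commute add.left_commute)
qed

lemma square_at_window:
  assumes "square_at xs p l" "a \<le> p" "p + 2*l \<le> a + length S"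
    and "\<forall>i. i < length S \<longrightarrow> a + i < length xs \<longrightarrow> S!i = xs!(a+i)"
  shows "square_at S (p - a) l"
proof -
  have l: "0 < l" "p + 2*l \<le> length xs" and eq: "\<forall>t<l. xs!(p+t) = xs!(p+l+t)"
    using assms(1) by (auto simp: square_at_def)
  show ?thesis unfolding square_at_def
  proof (intro conjI allI impI)
    show "0 < l" "p - a + 2 * l \<le> length S" using l assms(2,3) by auto
    fix t assume t: "t < l"
    have "S ! (p - a + t) = xs ! (p + t)"
      using assms(4)[rule_format, of "p - a + t"] assms(2,3) l t by auto
    moreover have "S ! (p - a + l + t) = xs ! (p + l + t)"
      using assms(4)[rule_format, of "p - a + l + t"] assms(2,3) l t by auto
    ultimately show "S ! (p - a + t) = S ! (p - a + l + t)" using eq t by simp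
  qed
qed

lemma square_free_appendD: "square_free (xs @ ys) \<Longrightarrow> square_free xs \<and> square_free ys"
  unfolding square_free_def by (metis append.assoc)

lemma square_free_Nil: "square_free []"
  unfolding square_free_def by simp

definition occurs_at :: "'a list \<Rightarrow> 'a list \<Rightarrow> nat \<Rightarrow> bool" where
  "occurs_at M xs b \<longleftrightarrow> b + length M \<le> length xs \<and> (\<forall>t<length M. xs!(b+t) = M!t)"

lemma square_at_occurs_at_shift_right:
  assumes "square_at xs p l" "occurs_at M xs b" "p \<le> b" "b + length M \<le> p + l"
  shows "occurs_at M xs (b + l)"
  unfolding occurs_at_def
proof (intro conjI allI impI)
  show "b + l + length M \<le> length xs" using assms by (simp add: square_at_def)
  fix t assume t: "t < length M"
  have "xs ! (b + l + t) = xs ! (b + t)"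
    using square_at_nth[OF assms(1), of "b + t"] assms(3,4) t by (simp add: ac_simps)
  also have "\<dots> = M ! t" using assms(2) t by (simp add: occurs_at_def)
  finally show "xs ! (b + l + t) = M ! t" .
qed

lemma square_at_occurs_at_shift_left:
  assumes "square_at xs p l" "occurs_at M xs b" "p + l \<le> b" "b + length M \<le> p + 2*l"
  shows "occurs_at M xs (b - l)"
  unfolding occurs_at_def
proof (intro conjI allI impI)
  show "b - l + length M \<le> length xs" using assms by (auto simp: occurs_at_def)
  fix t assume t: "t < length M"
  have "xs ! (b - l + t) = xs ! (b - l + t + l)" by (rule square_at_nth[OF assms(1)]) (use assms t in auto)
  also have "b - l + t + l = b + t" using assms(3) by simp
  finally show "xs ! (b - l + t) = M ! t" using assms(2) t by (simp add: occurs_at_def)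
qed

fun lcp :: "'a list \<Rightarrow> 'a list \<Rightarrow> nat" where
  "lcp (x#xs) (y#ys) = (if x = y then Suc (lcp xs ys) else 0)"
| "lcp _ _ = 0"

definition lcs :: "'a list \<Rightarrow> 'a list \<Rightarrow> nat" where
  "lcs xs ys = lcp (rev xs) (rev ys)"

lemma le_lcpI:
  "r \<le> length xs \<Longrightarrow> r \<le> length ys \<Longrightarrow> \<forall>t<r. xs!t = ys!t \<Longrightarrow> r \<le> lcp xs ys"
proof (induction xs arbitrary: ys r)
  case (Cons x xs)
  show ?case
  proof (cases r)
    case (Suc r')
    then obtain y ys' where ys: "ys = y # ys'" using Cons.prems by (cases ys) auto
    have "x = y" using Cons.prems(3) Suc ys by force
    moreover have "r' \<le> lcp xs ys'" using Cons.IH[of r' ys'] Cons.prems Suc ys by force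
    ultimately show ?thesis using Suc ys by simp
  qed simp
qed simp

lemma le_lcsI:
  assumes "length xs = n" "length ys = n" "r \<le> n" "\<forall>t. r \<le> t \<longrightarrow> t < n \<longrightarrow> xs!t = ys!t"
  shows "n - r \<le> lcs xs ys"
  unfolding lcs_def
proof (rule le_lcpI)
  show "n - r \<le> length (rev xs)" "n - r \<le> length (rev ys)" using assms by auto
  show "\<forall>t<n - r. rev xs ! t = rev ys ! t"
    using assms by (auto simp: rev_nth)
qed

section \<open>Fekete's lemma and the growth rate\<close>

lemma subadditive_le_mult:
  fixes x :: "nat \<Rightarrow> real"
  assumes "\<And>m n. x (m+n) \<le> x m + x n"
  shows "x (q*m + r) \<le> real q * x m + x r"
proof (induction q)
  case (Suc q)
  have "x (Suc q * m + r) = x (m + (q*m + r))" by (simp add: add.assoc)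
  also have "\<dots> \<le> x m + x (q*m + r)" by (rule assms)
  also have "\<dots> \<le> x m + (real q * x m + x r)" using Suc by simp
  finally show ?case by (simp add: algebra_simps)
qed simp

lemma fekete:
  fixes x :: "nat \<Rightarrow> real"
  assumes sub: "\<And>m n. x (m+n) \<le> x m + x n" and nonneg: "\<And>n. 0 \<le> x n"
  shows "(\<lambda>n. x n / real n) \<longlonglongrightarrow> (INF n\<in>{1..}. x n / real n)"
proof -
  define l where "l = (INF n\<in>{1..}. x n / real n)"
  have bdd: "bdd_below ((\<lambda>n. x n / real n) ` {1..})"
    by (rule bdd_belowI[of _ 0]) (auto intro: divide_nonneg_nonneg nonneg)
  have l_le: "\<And>n. 1 \<le> n \<Longrightarrow> l \<le> x n / real n" unfolding l_def by (rule cINF_lower[OF bdd]) simp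
  show ?thesis unfolding l_def[symmetric]
  proof (rule LIMSEQ_I)
    fix e :: real assume e: "0 < e"
    obtain m where m: "1 \<le> m" "x m / real m < l + e/2"
      using cInf_lessD[of "(\<lambda>n. x n / real n) ` {1..}" "l + e/2"] e unfolding l_def by auto
    define C where "C = Max (x ` {..<m})"
    have C: "\<And>r. r < m \<Longrightarrow> x r \<le> C" unfolding C_def by (rule Max_ge) auto
    show "\<exists>n0. \<forall>n\<ge>n0. norm (x n / real n - l) < e"
    proof (intro exI allI impI)
      fix n assume n: "nat \<lceil>2 * C / e\<rceil> + 1 \<le> n"
      then have n_pos: "0 < real n" and n_big: "2 * C / e < real n" by linarith+
      define q r where "q = n div m" and "r = n mod m"
      have "real q * real m \<le> real n" by (simp add: q_def flip: of_nat_mult)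
      then have "(real q * real m) * (x m / real m) \<le> real n * (x m / real m)"
        using m nonneg[of m] by (intro mult_right_mono) auto
      then have "real q * x m \<le> real n * (x m / real m)" using m by simp
      moreover have "x n \<le> real q * x m + x r"
        using subadditive_le_mult[of x, OF sub, of q m r] by (simp add: q_def r_def)
      moreover have "x r \<le> C" using C m by (simp add: r_def)
      ultimately have "x n / real n \<le> x m / real m + C / real n"
        using n_pos by (simp add: field_simps)
      moreover have "C / real n < e / 2" using n_big e n_pos by (simp add: field_simps)
      moreover have "l \<le> x n / real n" using l_le n by simp
      ultimately have "\<bar>x n / real n - l\<bar> < e" using m by linarith
      then show "norm (x n / real n - l) < e" by simp
    qed
  qed
qed

definition sqfree_words :: "nat \<Rightarrow> nat list set" where
  "sqfree_words n = {w. length w = n \<and> set w \<subseteq> {0,1,2} \<and> square_free w}"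

lemma sqfree_count_eq_card: "sqfree_count n = card (sqfree_words n)"
  unfolding sqfree_count_def sqfree_words_def ..

lemma finite_sqfree_words: "finite (sqfree_words n)"
  unfolding sqfree_words_def
  by (rule finite_subset[OF _ finite_lists_length_eq[of "{0::nat,1,2}" n]]) auto

lemma take_drop_in_sqfree_words:
  assumes "w \<in> sqfree_words (m+n)"
  shows "take m w \<in> sqfree_words m" "drop m w \<in> sqfree_words n"
proof -
  have "square_free (take m w) \<and> square_free (drop m w)"
    using assms square_free_appendD[of "take m w" "drop m w"] by (simp add: sqfree_words_def)
  then show "take m w \<in> sqfree_words m" "drop m w \<in> sqfree_words n"
    using assms by (auto simp: sqfree_words_def dest: in_set_takeD in_set_dropD)
qed

lemma sqfree_count_add_le: "sqfree_count (m+n) \<le> sqfree_count m * sqfree_count n"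
proof -
  have "card (sqfree_words (m+n)) \<le> card (sqfree_words m \<times> sqfree_words n)"
  proof (rule card_inj_on_le)
    show "inj_on (\<lambda>w. (take m w, drop m w)) (sqfree_words (m+n))"
      by (rule inj_onI) (metis append_take_drop_id prod.inject)
    show "(\<lambda>w. (take m w, drop m w)) ` sqfree_words (m+n) \<subseteq> sqfree_words m \<times> sqfree_words n"
      using take_drop_in_sqfree_words by blast
  qed (simp add: finite_sqfree_words)
  then show ?thesis by (simp add: sqfree_count_eq_card card_cartesian_product)
qed

lemma sqfree_count_pos_mono:
  assumes "0 < sqfree_count n" "m \<le> n"
  shows "0 < sqfree_count m"
proof -
  obtain w where "w \<in> sqfree_words (m + (n - m))"
    using assms by (auto simp: sqfree_count_eq_card card_gt_0_iff)
  then have "sqfree_words m \<noteq> {}" using take_drop_in_sqfree_words(1) by blast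
  then show ?thesis by (simp add: sqfree_count_eq_card card_gt_0_iff finite_sqfree_words)
qed

lemma growth_rate_ge:
  fixes \<beta> :: real
  assumes L: "0 < L" and \<beta>: "0 < \<beta>" and bound: "\<And>n. \<beta>^n \<le> real (sqfree_count (n*L))"
  shows "\<beta> powr (1 / real L) \<le> growth_rate"
proof -
  define x where "x n = ln (real (sqfree_count n))" for n
  have pos: "0 < sqfree_count n" for n
  proof (rule sqfree_count_pos_mono)
    show "0 < sqfree_count (n*L)" using bound[of n] \<beta> by (metis of_nat_0_less_iff zero_less_power order_less_le_trans)
    show "n \<le> n*L" using L by simp
  qed
  have x_nonneg: "0 \<le> x n" for n using pos[of n] by (simp add: x_def)
  have x_sub: "x (m+n) \<le> x m + x n" for m n
  proof -
    have "real (sqfree_count (m+n)) \<le> real (sqfree_count m) * real (sqfree_count n)"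
      by (metis sqfree_count_add_le of_nat_mono of_nat_mult)
    then have "ln (real (sqfree_count (m+n))) \<le> ln (real (sqfree_count m) * real (sqfree_count n))"
      using pos[of "m+n"] pos[of m] pos[of n] by simp
    then show ?thesis using pos[of m] pos[of n] by (simp add: x_def ln_mult)
  qed
  define l where "l = (INF n\<in>{1..}. x n / real n)"
  have lim: "(\<lambda>n. x n / real n) \<longlonglongrightarrow> l" unfolding l_def by (rule fekete[of x, OF x_sub x_nonneg])
  have "(\<lambda>n. real (sqfree_count n) powr (1 / real n)) = (\<lambda>n. exp (x n / real n))"
  proof
    show "real (sqfree_count n) powr (1 / real n) = exp (x n / real n)" for n
      using pos[of n] by (simp add: x_def powr_def)
  qed
  then have "growth_rate = exp l"
    unfolding growth_rate_def using tendsto_exp[OF lim] by (simp add: limI)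
  have "ln \<beta> / real L \<le> x (Suc k * L) / real (Suc k * L)" for k
  proof -
    have "ln (\<beta>^Suc k) \<le> x (Suc k * L)"
      unfolding x_def using bound[of "Suc k"] \<beta> pos[of "Suc k * L"]
      by (subst ln_le_cancel_iff) auto
    then have "real (Suc k) * ln \<beta> \<le> x (Suc k * L)" by (simp only: ln_realpow)
    then have "real (Suc k) * ln \<beta> / real (Suc k * L) \<le> x (Suc k * L) / real (Suc k * L)"
      by (rule divide_right_mono) simp
    moreover have "real (Suc k) * ln \<beta> / real (Suc k * L) = ln \<beta> / real L"
      unfolding of_nat_mult using L by (simp del: of_nat_Suc)
    ultimately show ?thesis by simp
  qed
  moreover have "(\<lambda>k. x (Suc k * L) / real (Suc k * L)) \<longlonglongrightarrow> l"
    using LIMSEQ_subseq_LIMSEQ[OF lim, of "\<lambda>k. Suc k * L"] L by (simp add: strict_mono_def o_def)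
  ultimately have "ln \<beta> / real L \<le> l" by (simp add: LIMSEQ_le_const)
  then have "exp (ln \<beta> / real L) \<le> exp l" by simp
  then show ?thesis
    unfolding \<open>growth_rate = exp l\<close> using \<beta> by (simp add: powr_def)
qed

lemma powr_reciprocal_le:
  fixes a b :: real
  assumes "0 < a" "0 < b" "0 < m" "0 < n" "a^m \<le> b^n"
  shows "a powr (1 / real n) \<le> b powr (1 / real m)"
proof -
  have "ln (a^m) \<le> ln (b^n)" using assms by simp
  then have "real m * ln a \<le> real n * ln b" by (simp add: ln_realpow)
  then have "ln a / real n \<le> ln b / real m" using assms by (simp add: field_simps)
  then show ?thesis using assms by (simp add: powr_def)
qed

lemma approx_65_powr_1_40: "(1.109999::real) < 65 powr (1/40)"
proof -
  have "(1.109999::real)^40 < 65" by (simp add: power_divide)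
  then have "ln ((1.109999::real)^40) < ln 65" by (subst ln_less_cancel_iff) auto
  then have "ln (1.109999::real) < ln 65 / 40" by (simp add: ln_realpow)
  then have "exp (ln (1.109999::real)) < exp (ln 65 / 40)" by (simp only: exp_less_cancel_iff)
  then show ?thesis by (simp add: powr_def)
qed

lemma sum_powers_le:
  fixes x :: real
  assumes "0 \<le> x" "x < 1"
  shows "(\<Sum>j=2..n. x^(j-1)) \<le> x / (1 - x)"
proof (cases n)
  case (Suc m)
  have "(\<Sum>j=2..n. x^(j-1)) = (\<Sum>i=1..m. x^i)"
    using Suc sum.shift_bounds_cl_Suc_ivl[of "\<lambda>j. x^(j-1)" 1 m] by (simp add: numeral_2_eq_2)
  also have "\<dots> \<le> x / (1 - x)"
    using assms by (auto simp: sum_gp intro: divide_right_mono)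
  finally show ?thesis .
qed (use assms in simp)

lemma geometric_tail_le:
  fixes c :: "nat \<Rightarrow> real" and \<beta> :: real
  assumes \<beta>: "1 < \<beta>" and growth: "\<And>i. i < n \<Longrightarrow> \<beta> * c i \<le> c (Suc i)"
    and nonneg: "\<And>i. 0 \<le> c i"
  shows "(\<Sum>j=2..n. c (Suc n - j)) \<le> c n / (\<beta> - 1)"
proof -
  have c_le: "\<beta>^i * c (n - i) \<le> c n" if "i \<le> n" for i
    using that
  proof (induction i)
    case (Suc i)
    have "\<beta> * c (n - Suc i) \<le> c (Suc (n - Suc i))" using growth[of "n - Suc i"] Suc.prems by simp
    also have "Suc (n - Suc i) = n - i" using Suc.prems by simp
    finally have "\<beta>^Suc i * c (n - Suc i) \<le> \<beta>^i * c (n - i)" using \<beta> by simp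
    then show ?case using Suc by simp
  qed simp
  have "(\<Sum>j=2..n. c (Suc n - j)) \<le> (\<Sum>j=2..n. c n * (1/\<beta>)^(j-1))"
  proof (rule sum_mono)
    fix j assume "j \<in> {2..n}"
    then have "j - 1 \<le> n" "n - (j - 1) = Suc n - j" by auto
    then have "\<beta>^(j-1) * c (Suc n - j) \<le> c n" using c_le[of "j - 1"] by simp
    then show "c (Suc n - j) \<le> c n * (1/\<beta>)^(j-1)" using \<beta> by (simp add: field_simps)
  qed
  also have "\<dots> = c n * (\<Sum>j=2..n. (1/\<beta>)^(j-1))" by (rule sum_distrib_left[symmetric])
  also have "\<dots> \<le> c n * ((1/\<beta>) / (1 - 1/\<beta>))"
    using sum_powers_le[of "1/\<beta>" n] \<beta> nonneg by (intro mult_left_mono) auto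
  also have "(1/\<beta>) / (1 - 1/\<beta>) = 1 / (\<beta> - 1)" using \<beta> by (simp add: field_simps)
  finally show ?thesis by simp
qed

section \<open>Block codes\<close>

locale block_code =
  fixes V :: "nat list list" and succs :: "nat list list" and s :: "nat list"
    and L q deg K :: nat and M :: "nat list"
  assumes length_V: "\<And>i. i < length V \<Longrightarrow> length (V!i) = L"
    and set_V: "\<And>i. i < length V \<Longrightarrow> set (V!i) \<subseteq> {0,1,2}"
    and distinct_V: "distinct V"
    and length_M: "length M = q" and q_pos: "0 < q" and q_le_L: "q \<le> L"
    and V_marker: "\<And>i. i < length V \<Longrightarrow> take q (V!i) = M"
    and marker_unique: "\<And>i p. i < length V \<Longrightarrow> 0 < p \<Longrightarrow> p < L
      \<Longrightarrow> take q (drop p (V!i @ butlast M)) \<noteq> M"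
    and square_free_V: "\<And>i. i < length V \<Longrightarrow> square_free (V!i @ butlast M)"
    and succs_valid: "\<And>x y. x < length V \<Longrightarrow> y \<in> set (succs!x) \<Longrightarrow> y < length V \<and> y \<noteq> x"
    and no_square_across: "\<And>x y d l. x < length V \<Longrightarrow> y \<in> set (succs!x) \<Longrightarrow> 0 < d \<Longrightarrow> d < q
      \<Longrightarrow> l \<le> L + d \<Longrightarrow> \<not> square_at (V!x @ V!y @ butlast M) (L + d - l) l"
    and lcs_lcp_lt: "\<And>x y z. x < length V \<Longrightarrow> y \<in> set (succs!x) \<Longrightarrow> z \<in> set (succs!y)
      \<Longrightarrow> lcs (V!x) (V!y) + lcp (V!y) (V!z) < L"
    and distinct_succs: "\<And>x. x < length V \<Longrightarrow> distinct (succs!x)"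
    and deg_le_succs: "\<And>x. x < length V \<Longrightarrow> deg \<le> length (succs!x)"
    and deg_le: "deg \<le> length V"
    and lcs_le: "\<And>x y. x < length V \<Longrightarrow> y < length V \<Longrightarrow> x \<noteq> y
      \<Longrightarrow> lcs (V!x) (V!y) \<le> s!y"
    and card_compatible_le: "\<And>y. y < length V
      \<Longrightarrow> card {z. z < length V \<and> take (L - s!y) (V!z) = take (L - s!y) (V!y)} \<le> K"
begin

abbreviation N :: nat where "N \<equiv> length V"

lemma L_pos: "0 < L"
  using q_pos q_le_L by simp

definition code :: "nat list \<Rightarrow> nat list" where
  "code w = concat (map ((!) V) w)"

lemma nth_less_N: "set w \<subseteq> {..<N} \<Longrightarrow> m < length w \<Longrightarrow> w!m < N"
  by (meson lessThan_iff nth_mem subsetD)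

lemma code_simps [simp]: "code [] = []" "code (a#w) = V!a @ code w" "code (w @ v) = code w @ code v"
  by (auto simp: code_def)

lemma length_code: "set w \<subseteq> {..<N} \<Longrightarrow> length (code w) = length w * L"
  by (induction w) (auto simp: length_V)

lemma nth_code:
  assumes "set w \<subseteq> {..<N}" "m < length w" "t < L"
  shows "code w ! (m*L + t) = V!(w!m)!t"
  using assms
proof (induction w arbitrary: m)
  case (Cons a w)
  then show ?case by (cases m) (auto simp: nth_append length_V add.assoc)
qed simp

lemma nth_code_marker:
  assumes "set w \<subseteq> {..<N}" "m < length w" "t < q"
  shows "code w ! (m*L + t) = M!t"
proof -
  have "w!m < N" using assms nth_less_N by blast
  then have "V!(w!m)!t = M!t" using V_marker[of "w!m"] length_V[of "w!m"] assms(3) q_le_L by (metis nth_take)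
  then show ?thesis using nth_code[OF assms(1,2)] assms(3) q_le_L by simp
qed

lemma code_window:
  assumes w: "set w \<subseteq> {..<N}" and kj: "k + j \<le> length w"
    and i: "i < j*L + (q - 1)" "k*L + i < length (code w)"
  shows "(code (take j (drop k w)) @ butlast M) ! i = code w ! (k*L + i)"
proof -
  have set_drop: "set (drop k w) \<subseteq> {..<N}" and set_take: "set (take k w) \<subseteq> {..<N}"
    using w by (auto dest: in_set_dropD in_set_takeD)
  have code_w: "code w = code (take k w) @ code (take j (drop k w)) @ code (drop j (drop k w))"
    by (metis append_take_drop_id code_simps(3))
  have len_k: "length (code (take k w)) = k*L" and len_j: "length (code (take j (drop k w))) = j*L"
    using kj length_code[OF set_take] length_code[of "take j (drop k w)"] set_drop
    by (auto dest: in_set_takeD)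
  show ?thesis
  proof (cases "i < j*L")
    case True
    then show ?thesis by (simp add: code_w nth_append len_k len_j)
  next
    case False
    have "(k+j)*L < length w * L" using i(2) False length_code[OF w] by (simp add: algebra_simps)
    then have "k + j < length w" by simp
    moreover have "i - j*L < q" using i(1) False by simp
    ultimately have "code w ! ((k+j)*L + (i - j*L)) = M ! (i - j*L)"
      by (rule nth_code_marker[OF w])
    moreover have "(k+j)*L + (i - j*L) = k*L + i" using False by (simp add: algebra_simps)
    ultimately show ?thesis using False i(1) len_j length_M by (simp add: nth_append nth_butlast)
  qed
qed

definition walk :: "nat list \<Rightarrow> bool" where
  "walk w \<longleftrightarrow> (\<forall>i. Suc i < length w \<longrightarrow> w!Suc i \<in> set (succs!(w!i)))"

lemma occurs_at_block_start:
  assumes w: "set w \<subseteq> {..<N}" and "L dvd b" "b + q \<le> length (code w)"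
  shows "occurs_at M (code w) b"
proof -
  obtain m where "b = L*m" using assms(2) by (rule dvdE)
  then have b: "b = m*L" by simp
  have "m*L < length w * L" using assms(3) b q_pos length_code[OF w] by linarith
  then have "m < length w" by simp
  then show ?thesis using assms(3) nth_code_marker[OF w] b length_M by (simp add: occurs_at_def)
qed

lemma occurs_at_dvd:
  assumes w: "set w \<subseteq> {..<N}" and occ: "occurs_at M (code w) b"
  shows "L dvd b"
proof (rule ccontr)
  assume "\<not> L dvd b"
  define m r where "m = b div L" and "r = b mod L"
  have b: "b = m*L + r" and r: "0 < r" "r < L"
    using \<open>\<not> L dvd b\<close> L_pos by (auto simp: m_def r_def dvd_eq_mod_eq_0)
  have b_len: "b + q \<le> length w * L" using occ length_code[OF w] length_M by (simp add: occurs_at_def)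
  then have "m*L < length w * L" using b r by linarith
  then have m: "m < length w" by simp
  have wm: "w!m < N" using nth_less_N[OF w m] .
  let ?S = "V!(w!m) @ butlast M"
  have len_S: "length ?S = L + (q - 1)" using length_V[OF wm] length_M by simp
  have S_eq: "?S = code (take (Suc 0) (drop m w)) @ butlast M" using m by (simp add: take_drop_Suc_eq)
  have "take q (drop r ?S) = M"
  proof (rule nth_equalityI)
    show "length (take q (drop r ?S)) = length M" using len_S r length_M by simp
    fix t assume "t < length (take q (drop r ?S))"
    then have t: "t < q" "r + t < L + (q - 1)" using len_S r by auto
    have "take q (drop r ?S) ! t = drop r ?S ! t" using t(1) by (rule nth_take)
    also have "\<dots> = ?S ! (r + t)" using t(2) len_S by (intro nth_drop) simp
    also have "\<dots> = code w ! (m*L + (r + t))"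
      unfolding S_eq using code_window[OF w, of m "Suc 0" "r + t"] m t b_len b length_code[OF w] by simp
    also have "\<dots> = M ! t" using occ t b length_M by (simp add: occurs_at_def add.assoc)
    finally show "take q (drop r ?S) ! t = M ! t" .
  qed
  then show False using marker_unique[OF wm r] by simp
qed

lemma square_in_block_window_impossible:
  assumes w: "set w \<subseteq> {..<N}" and sq: "square_at (code w) p l"
    and k: "k < length w" "k*L \<le> p" "p + 2*l \<le> k*L + L + (q - 1)"
  shows False
proof -
  have x: "w!k < N" using nth_less_N[OF w k(1)] .
  let ?S = "V!(w!k) @ butlast M"
  have "square_at ?S (p - k*L) l"
  proof (rule square_at_window[OF sq k(2)])
    show "p + 2*l \<le> k*L + length ?S" using k(3) length_V[OF x] length_M by simp
    show "\<forall>i. i < length ?S \<longrightarrow> k*L + i < length (code w) \<longrightarrow> ?S!i = code w ! (k*L + i)"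
      using code_window[OF w, of k "Suc 0"] k(1) length_V[OF x] length_M by (simp add: take_drop_Suc_eq)
  qed
  then show False using square_free_V[OF x] by (simp add: square_free_iff_no_square_at)
qed

lemma square_across_blocks_impossible:
  assumes w: "set w \<subseteq> {..<N}" "walk w" and sq: "square_at (code w) p l"
    and k: "Suc k < length w" "k*L \<le> p" "p + 2*l \<le> k*L + 2*L + (q - 1)"
    and d: "0 < d" "d < q" "p + l = k*L + L + d"
  shows False
proof -
  let ?x = "w!k" and ?y = "w!Suc k"
  have x: "?x < N" and y: "?y \<in> set (succs!?x)" "?y < N"
    using w k(1) by (auto simp: walk_def intro: nth_less_N)
  let ?S = "V!?x @ V!?y @ butlast M"
  have "square_at ?S (p - k*L) l"
  proof (rule square_at_window[OF sq k(2)])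
    show "p + 2*l \<le> k*L + length ?S" using k(3) length_V[OF x] length_V[OF y(2)] length_M by simp
    show "\<forall>i. i < length ?S \<longrightarrow> k*L + i < length (code w) \<longrightarrow> ?S!i = code w ! (k*L + i)"
      using code_window[OF w(1), of k 2] k(1) length_V[OF x] length_V[OF y(2)] length_M
      by (simp add: take_drop_Suc_eq numeral_2_eq_2)
  qed
  moreover have "p - k*L = L + d - l" "l \<le> L + d" using d(3) k(2) by simp_all
  ultimately show False using no_square_across[OF x y(1) d(1,2)] by simp
qed

text \<open>
  Without a block boundary b whose marker lies inside one half of the square, the square fits
  into one block or two consecutive blocks, each time followed by butlast M.
\<close>

lemma square_in_short_window_impossible:
  assumes w: "set w \<subseteq> {..<N}" "walk w" and sq: "square_at (code w) p l"
    and no_first: "\<And>b. L dvd b \<Longrightarrow> p \<le> b \<Longrightarrow> b + q \<le> p + l \<Longrightarrow> False"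
    and no_second: "\<And>b. L dvd b \<Longrightarrow> p + l \<le> b \<Longrightarrow> b + q \<le> p + 2*l \<Longrightarrow> False"
  shows False
proof -
  define k where "k = p div L"
  define b where "b = k*L + L"
  have "p = k*L + p mod L" "p mod L < L" using L_pos by (simp_all add: k_def)
  then have p: "k*L \<le> p" "p < b" unfolding b_def by linarith+
  have len: "p + 2*l \<le> length w * L" "0 < l" using sq length_code[OF w(1)] by (auto simp: square_at_def)
  have "k*L < length w * L" using p len by linarith
  then have k: "k < length w" by simp
  consider "p + 2*l \<le> b + (q - 1)" | "b + q \<le> p + 2*l" using q_pos by linarith
  then show False
  proof cases
    case 1
    then show False using square_in_block_window_impossible[OF w(1) sq k p(1)] b_def by simp
  next
    case 2
    have "L dvd b" by (simp add: b_def)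
    have c1: "p + l < b + q" using no_first[OF \<open>L dvd b\<close>] p(2) by (meson not_le less_imp_le)
    have c2: "b < p + l" using no_second[OF \<open>L dvd b\<close> _ 2] by (meson not_le)
    have "L dvd (b + L)" "p + l \<le> b + L" using \<open>L dvd b\<close> c1 q_le_L by simp_all
    then have "\<not> b + L + q \<le> p + 2*l" using no_second by blast
    then have c3: "p + 2*l \<le> b + L + (q - 1)" by linarith
    have "Suc k * L < length w * L" using 2 len q_pos b_def by simp
    then have "Suc k < length w" by (metis mult_less_cancel2)
    moreover have "p + 2*l \<le> k*L + 2*L + (q - 1)" "0 < p + l - b" "p + l - b < q"
      "p + l = k*L + L + (p + l - b)"
      using c1 c2 c3 b_def by arith+
    ultimately show False using square_across_blocks_impossible[OF w sq _ p(1)] by blast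
  qed
qed

text \<open>
  A marker inside one half of a square is copied into the other half, and markers occur only at
  block boundaries.
\<close>

lemma square_period_dvd:
  assumes w: "set w \<subseteq> {..<N}" "walk w" and sq: "square_at (code w) p l"
  shows "L dvd l"
proof (rule ccontr)
  assume nd: "\<not> L dvd l"
  have len: "p + 2*l \<le> length (code w)" using sq by (simp add: square_at_def)
  show False
  proof (rule square_in_short_window_impossible[OF w sq])
    fix b assume b: "L dvd b" "p \<le> b" "b + q \<le> p + l"
    have "occurs_at M (code w) b" using occurs_at_block_start[OF w(1) b(1)] b len by simp
    then have "occurs_at M (code w) (b + l)"
      using square_at_occurs_at_shift_right[OF sq] b length_M by simp
    then have "L dvd b + l" by (rule occurs_at_dvd[OF w(1)])
    then show False using nd b(1) by (simp add: dvd_add_right_iff)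
  next
    fix b assume b: "L dvd b" "p + l \<le> b" "b + q \<le> p + 2*l"
    have "occurs_at M (code w) b" using occurs_at_block_start[OF w(1) b(1)] b len by simp
    then have "occurs_at M (code w) (b - l)"
      using square_at_occurs_at_shift_left[OF sq] b length_M by simp
    then have "L dvd b - l" by (rule occurs_at_dvd[OF w(1)])
    then have "L dvd b - (b - l)" using b(1) by (rule dvd_diff_nat[rotated])
    then show False using nd b(2) by simp
  qed
qed

lemma square_at_code_length:
  assumes w: "set w \<subseteq> {..<N}" and sq: "square_at (code w) (k*L + r) (j*L)"
  shows "k + 2*j \<le> length w"
proof -
  have "(k + 2*j) * L \<le> length w * L"
    using sq length_code[OF w] by (simp add: square_at_def algebra_simps)
  then show ?thesis using L_pos by simp
qed

lemma square_at_code_nth_eq: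
  assumes w: "set w \<subseteq> {..<N}" and sq: "square_at (code w) (k*L + r) (j*L)"
    and mt: "r \<le> m*L + t" "m*L + t < r + j*L" and t: "t < L"
  shows "V!(w!(k+m))!t = V!(w!(k+j+m))!t"
proof -
  have "k*L + r + 2*(j*L) \<le> length w * L"
    using sq length_code[OF w] by (simp add: square_at_def)
  then have "(k+j+m)*L < length w * L" using mt by (simp add: algebra_simps)
  then have km: "k+j+m < length w" "k+m < length w" by simp_all
  have "code w ! ((k+m)*L + t) = code w ! ((k+m)*L + t + j*L)"
    by (rule square_at_nth[OF sq]) (use mt in \<open>simp_all add: algebra_simps\<close>)
  moreover have "(k+m)*L + t + j*L = (k+j+m)*L + t" by (simp add: algebra_simps)
  ultimately show ?thesis using nth_code[OF w km(2) t] nth_code[OF w km(1) t] by simp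
qed

lemma square_at_code_block_eq:
  assumes w: "set w \<subseteq> {..<N}" and sq: "square_at (code w) (k*L + r) (j*L)"
    and m: "r \<le> m*L" "m < j"
  shows "w!(k+m) = w!(k+j+m)"
proof -
  have km: "k+m < length w" "k+j+m < length w" using square_at_code_length[OF w sq] m(2) by simp_all
  have "Suc m * L \<le> j * L" using m(2) by (intro mult_le_mono1) simp
  then have "V!(w!(k+m)) = V!(w!(k+j+m))"
    using square_at_code_nth_eq[OF w sq, of m] m nth_less_N[OF w] km length_V
    by (intro nth_equalityI) auto
  then show ?thesis using distinct_V nth_less_N[OF w] km by (simp add: nth_eq_iff_index_eq)
qed

lemma square_free_of_code:
  assumes w: "set w \<subseteq> {..<N}" and sf: "square_free (code w)"
  shows "square_free w"
  unfolding square_free_def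
proof
  assume "\<exists>x y z. y \<noteq> [] \<and> w = x @ y @ y @ z"
  then obtain x y z where y: "y \<noteq> []" and w_eq: "w = x @ y @ y @ z" by blast
  have "length (code y) = length y * L" using w w_eq by (intro length_code) auto
  then have "code y \<noteq> []" using y L_pos by auto
  moreover have "code w = code x @ code y @ code y @ code z" using w_eq by simp
  ultimately show False using sf unfolding square_free_def by blast
qed

lemma inj_on_code: "inj_on code {w. set w \<subseteq> {..<N}}"
proof (rule inj_onI)
  fix w v assume "w \<in> {w. set w \<subseteq> {..<N}}" "v \<in> {w. set w \<subseteq> {..<N}}" "code w = code v"
  then show "w = v"
  proof (induction w arbitrary: v)
    case Nil
    then show ?case using length_code[of v] L_pos by simp
  next
    case (Cons a w)
    obtain b v' where v: "v = b # v'"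
      using Cons.prems length_code[of v] length_V[of a] L_pos by (cases v) auto
    have "V!a @ code w = V!b @ code v'" and ab: "a < N" "b < N" using Cons.prems v by auto
    then have "V!a = V!b" "code w = code v'" using length_V by auto
    then show ?case using Cons.IH[of v'] Cons.prems v ab distinct_V by (simp add: nth_eq_iff_index_eq)
  qed
qed

definition good_words :: "nat \<Rightarrow> nat list set" where
  "good_words n = {w. length w = n \<and> set w \<subseteq> {..<N} \<and> walk w \<and> square_free (code w)}"

lemma good_words_0: "good_words 0 = {[]}"
  by (auto simp: good_words_def walk_def square_free_Nil)

lemma finite_good_words: "finite (good_words n)"
  by (rule finite_subset[OF _ finite_lists_length_eq[of "{..<N}" n]]) (auto simp: good_words_def)

lemma take_in_good_words:
  assumes w: "w \<in> good_words n" and "m \<le> n"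
  shows "take m w \<in> good_words m"
proof -
  have "code w = code (take m w) @ code (drop m w)" by (metis append_take_drop_id code_simps(3))
  then have "square_free (code (take m w))"
    using w square_free_appendD[of "code (take m w)" "code (drop m w)"] by (simp add: good_words_def)
  then show ?thesis using assms by (auto simp: good_words_def walk_def dest: in_set_takeD)
qed

lemma card_good_words_le: "card (good_words n) \<le> sqfree_count (n*L)"
proof -
  have "card (good_words n) = card (code ` good_words n)"
    by (rule card_image[symmetric], rule inj_on_subset[OF inj_on_code]) (auto simp: good_words_def)
  also have "\<dots> \<le> card (sqfree_words (n*L))"
  proof (rule card_mono[OF finite_sqfree_words], rule)
    fix x assume "x \<in> code ` good_words n"
    then obtain w where w: "w \<in> good_words n" and x: "x = code w" by auto
    have "set (code w) \<subseteq> {0,1,2}" using w set_V by (auto simp: code_def good_words_def)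
    then show "x \<in> sqfree_words (n*L)" using w x length_code by (auto simp: sqfree_words_def good_words_def)
  qed
  finally show ?thesis by (simp add: sqfree_count_eq_card)
qed

definition extensions :: "nat list \<Rightarrow> nat set" where
  "extensions w = (if w = [] then {..<N} else set (succs!(last w)))"

lemma extensions_last: "w \<noteq> [] \<Longrightarrow> extensions w = set (succs!(last w))"
  by (simp add: extensions_def)

lemma append_extension:
  assumes w: "w \<in> good_words n" and a: "a \<in> extensions w"
  shows "set (w @ [a]) \<subseteq> {..<N}" "walk (w @ [a])"
proof -
  have "a < N"
  proof (cases "w = []")
    case False
    then have "last w < N" using w last_in_set by (auto simp: good_words_def)
    then show ?thesis using a False succs_valid by (auto simp: extensions_def)
  qed (use a in \<open>simp add: extensions_def\<close>)
  then show "set (w @ [a]) \<subseteq> {..<N}" using w by (auto simp: good_words_def)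
  show "walk (w @ [a])"
    unfolding walk_def
  proof (intro allI impI)
    fix i assume i: "Suc i < length (w @ [a])"
    show "(w @ [a]) ! Suc i \<in> set (succs ! ((w @ [a]) ! i))"
    proof (cases "Suc i < length w")
      case True
      then show ?thesis using w by (auto simp: good_words_def walk_def nth_append)
    next
      case False
      then have len: "Suc i = length w" using i by simp
      then have "w \<noteq> []" "last w = w!i" by (auto intro: last_eq_nth)
      then show ?thesis using a len by (simp add: extensions_def nth_append)
    qed
  qed
qed

lemma card_extensions:
  assumes w: "w \<in> good_words n"
  shows "finite (extensions w)" "deg \<le> card (extensions w)"
proof -
  have "finite (extensions w) \<and> deg \<le> card (extensions w)"
  proof (cases "w = []")
    case False
    then have "last w < N" using w last_in_set by (auto simp: good_words_def)
    then show ?thesis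
      using False distinct_succs deg_le_succs by (simp add: extensions_def distinct_card)
  qed (simp add: extensions_def deg_le)
  then show "finite (extensions w)" "deg \<le> card (extensions w)" by simp_all
qed

text \<open>
  If a square of j blocks ends inside the new block, the new block agrees with the block y it
  repeats on a prefix of length L - s!y.
\<close>

definition compatible :: "nat \<Rightarrow> nat set" where
  "compatible y = {z. z < N \<and> take (L - s!y) (V!z) = take (L - s!y) (V!y)}"

text \<open>
  Walks of n + 1 blocks that continue a good prefix P of n + 1 - j blocks periodically with
  period j, except that the last block z need only be compatible with its counterpart last P.
\<close>

definition square_completions :: "nat \<Rightarrow> nat \<Rightarrow> nat list set" where
  "square_completions n j =
     (\<lambda>(P, z). P @ butlast (drop (length P - j) P) @ [z])
       ` (SIGMA P:good_words (Suc n - j). compatible (last P))"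

lemma append_in_square_completions:
  assumes w: "w \<in> good_words n" and j: "0 < j" "2*j \<le> Suc n"
    and period: "\<And>i. Suc n - j \<le> i \<Longrightarrow> i < n \<Longrightarrow> w!i = w!(i - j)"
    and a: "a \<in> compatible (w!(n-j))"
  shows "w @ [a] \<in> square_completions n j"
proof -
  define P where "P = take (Suc n - j) w"
  have len_w: "length w = n" using w by (simp add: good_words_def)
  have P: "P \<in> good_words (Suc n - j)" unfolding P_def using take_in_good_words[OF w] j by simp
  have len_P: "length P = Suc n - j" using len_w j by (simp add: P_def)
  have "length P = Suc (n - j)" using len_P j by simp
  then have last_P: "last P = w!(n-j)" by (simp add: last_eq_nth) (simp add: P_def)
  have "drop (Suc n - j) w = butlast (drop (length P - j) P)"
  proof (rule nth_equalityI)
    show "length (drop (Suc n - j) w) = length (butlast (drop (length P - j) P))" using len_w len_P j by simp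
    fix i assume "i < length (drop (Suc n - j) w)"
    then have i: "i < j - 1" using len_w j by simp
    have "drop (Suc n - j) w ! i = w ! (Suc n - j + i)" using len_w j i by simp
    also have "\<dots> = w ! (Suc n - j + i - j)" using period i j by simp
    also have "\<dots> = butlast (drop (length P - j) P) ! i"
      using i j len_P by (simp add: nth_butlast P_def)
    finally show "drop (Suc n - j) w ! i = butlast (drop (length P - j) P) ! i" .
  qed
  then have "w @ [a] = P @ butlast (drop (length P - j) P) @ [a]"
    by (metis P_def append_take_drop_id append.assoc)
  then show ?thesis
    unfolding square_completions_def using P a last_P by (auto intro!: image_eqI[where x = "(P, a)"])
qed

lemma aligned_square_extension:
  assumes w: "w \<in> good_words n" and a: "a \<in> extensions w"
    and sq: "square_at (code (w @ [a])) (k*L + 0) (j*L)" and kj: "k + 2*j = Suc n"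
  shows "2 \<le> j \<and> w @ [a] \<in> square_completions n j"
proof -
  let ?u = "w @ [a]"
  have len_w: "length w = n" using w by (simp add: good_words_def)
  have u: "set ?u \<subseteq> {..<N}" using append_extension[OF w a] by simp
  have "0 < j" using sq by (simp add: square_at_def)
  have period: "?u!(k+m) = ?u!(k+j+m)" if "m < j" for m
    using square_at_code_block_eq[OF u sq] that by simp
  have "j \<noteq> 1"
  proof
    assume "j = 1"
    then have "n = Suc k" "w!k = a" using period[of 0] kj len_w by (simp_all add: nth_append)
    moreover have "w!k < N" using w \<open>n = Suc k\<close> by (simp add: good_words_def nth_less_N)
    moreover have "w \<noteq> []" "last w = w!k" using len_w \<open>n = Suc k\<close> last_eq_nth by auto
    then have "a \<in> set (succs!(w!k))" using a by (simp add: extensions_last)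
    ultimately show False using succs_valid by blast
  qed
  with \<open>0 < j\<close> have j: "2 \<le> j" by simp
  have "w!i = w!(i - j)" if i: "Suc n - j \<le> i" "i < n" for i
  proof -
    have "k + (i - k - j) = i - j" "k + j + (i - k - j) = i" "i - k - j < j" using i kj by arith+
    then have "?u!(i - j) = ?u!i" using period[of "i - k - j"] by simp
    moreover have "i - j < length w" using i len_w by simp
    ultimately show ?thesis using i len_w by (simp add: nth_append)
  qed
  moreover have "w!(n-j) = a"
  proof -
    have "k + (j - 1) = n - j" "k + j + (j - 1) = n" "j - 1 < j" using kj j by arith+
    then have "?u!(n - j) = ?u!n" using period[of "j - 1"] by simp
    moreover have "n - j < length w" using kj j len_w by simp
    ultimately show ?thesis using len_w by (simp add: nth_append)
  qed
  moreover have "a < N" using u by simp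
  ultimately show ?thesis
    using append_in_square_completions[OF w] j kj by (simp add: compatible_def)
qed

lemma square_at_code_lcs:
  assumes u: "set u \<subseteq> {..<N}" and sq: "square_at (code u) (k*L + r) (j*L)" and r: "r \<le> L"
  shows "L - r \<le> lcs (V!(u!k)) (V!(u!(k+j)))"
proof -
  have "0 < j" using sq by (simp add: square_at_def)
  then have "u!k < N" "u!(k+j) < N" using square_at_code_length[OF u sq] nth_less_N[OF u] by simp_all
  moreover have "V!(u!k)!t = V!(u!(k+j))!t" if "r \<le> t" "t < L" for t
  proof -
    have "L \<le> j*L" using \<open>0 < j\<close> by simp
    then have "t < r + j*L" using that by linarith
    then show ?thesis using square_at_code_nth_eq[OF u sq, of 0 t] that by simp
  qed
  ultimately show ?thesis using r by (intro le_lcsI[OF length_V length_V]) auto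
qed

lemma unaligned_square_extension:
  assumes w: "w \<in> good_words n" and a: "a \<in> extensions w"
    and sq: "square_at (code (w @ [a])) (k*L + r) (j*L)" and r: "0 < r" "r < L"
    and kj: "k + 2*j = n"
  shows "2 \<le> j \<and> w @ [a] \<in> square_completions n j"
proof -
  let ?u = "w @ [a]" and ?X = "w!k" and ?Y = "w!(k+j)"
  have len_w: "length w = n" and w_set: "set w \<subseteq> {..<N}"
    and "walk w" and "square_free (code w)" using w by (simp_all add: good_words_def)
  have u: "set ?u \<subseteq> {..<N}" using append_extension[OF w a] by simp
  have "0 < j" using sq by (simp add: square_at_def)
  then have L_le: "L \<le> j*L" by simp
  have XY: "?X < N" "?Y < N" "a < N" using w_set u kj \<open>0 < j\<close> len_w by (auto intro: nth_less_N)
  have u_nth: "?u!k = ?X" "?u!(k+j) = ?Y" "?u!(k+j+j) = a"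
    using kj \<open>0 < j\<close> len_w by (simp_all add: nth_append)
  have period: "?u!(k+m) = ?u!(k+j+m)" if "1 \<le> m" "m < j" for m
  proof (rule square_at_code_block_eq[OF u sq _ that(2)])
    have "1 * L \<le> m * L" using that(1) by (rule mult_le_mono1)
    then show "r \<le> m * L" using r(2) by linarith
  qed
  have suffix: "L - r \<le> lcs (V!?X) (V!?Y)"
    using square_at_code_lcs[OF u sq] u_nth r by simp
  have prefix: "V!?Y!t = V!a!t" if "t < r" for t
    using square_at_code_nth_eq[OF u sq, of j t] u_nth r L_le that by simp
  have "?X \<noteq> ?Y"
  proof
    assume "?X = ?Y"
    have "w!(k+m) = w!(k+j+m)" if "m < j" for m
    proof (cases "m = 0")
      case False
      then show ?thesis using period[of m] that kj len_w by (simp add: nth_append)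
    qed (use \<open>?X = ?Y\<close> in simp)
    then have "square_at w k j" using kj \<open>0 < j\<close> len_w by (simp add: square_at_def)
    then show False
      using square_free_of_code[OF w_set \<open>square_free (code w)\<close>] by (auto simp: square_free_iff_no_square_at)
  qed
  have "j \<noteq> 1"
  proof
    assume "j = 1"
    then have "?Y \<in> set (succs!?X)" using \<open>walk w\<close> kj len_w by (simp add: walk_def)
    moreover have "w \<noteq> []" "last w = ?Y" using \<open>j = 1\<close> kj len_w last_eq_nth by auto
    then have "a \<in> set (succs!?Y)" using a by (simp add: extensions_last)
    moreover have "r \<le> lcp (V!?Y) (V!a)"
      by (rule le_lcpI) (use prefix length_V XY r in auto)
    ultimately show False using lcs_lcp_lt[OF XY(1)] suffix r by fastforce
  qed
  with \<open>0 < j\<close> have j: "2 \<le> j" by simp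
  have "w!i = w!(i - j)" if i: "Suc n - j \<le> i" "i < n" for i
  proof -
    have "k + (i - k - j) = i - j" "k + j + (i - k - j) = i" "1 \<le> i - k - j" "i - k - j < j"
      using i kj j by arith+
    then have "?u!(i - j) = ?u!i" using period[of "i - k - j"] by simp
    moreover have "i - j < length w" using i len_w by simp
    ultimately show ?thesis using i len_w by (simp add: nth_append)
  qed
  moreover have "a \<in> compatible (w!(n-j))"
  proof -
    have "L - s!?Y \<le> r" using lcs_le[OF XY(1,2) \<open>?X \<noteq> ?Y\<close>] suffix by linarith
    then have "take (L - s!?Y) (V!a) = take (L - s!?Y) (V!?Y)"
      using prefix length_V XY by (intro nth_equalityI) auto
    moreover have "n - j = k + j" using kj by simp
    ultimately show ?thesis using XY by (simp add: compatible_def)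
  qed
  ultimately show ?thesis using append_in_square_completions[OF w] j kj by simp
qed

lemma non_square_free_extension:
  assumes w: "w \<in> good_words n" and a: "a \<in> extensions w" and ns: "\<not> square_free (code (w @ [a]))"
  shows "\<exists>j\<in>{2..n}. w @ [a] \<in> square_completions n j"
proof -
  let ?u = "w @ [a]"
  have len_w: "length w = n" and w_set: "set w \<subseteq> {..<N}" using w by (simp_all add: good_words_def)
  have u: "set ?u \<subseteq> {..<N}" "walk ?u" using append_extension[OF w a] by simp_all
  obtain p l where sq: "square_at (code ?u) p l" using ns by (auto simp: square_free_iff_no_square_at)
  obtain j where l: "l = j*L" using square_period_dvd[OF u sq] by (metis dvdE mult.commute)
  have ends: "p + 2*l \<le> Suc n * L" using sq length_code[OF u(1)] len_w by (simp add: square_at_def)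
  have late: "n*L < p + 2*l"
  proof (rule ccontr)
    assume "\<not> n*L < p + 2*l"
    then have "square_at (code w) (p - 0) l"
      using length_code[OF w_set] len_w
      by (intro square_at_window[OF sq]) (auto simp: nth_append)
    then show False using w by (auto simp: good_words_def square_free_iff_no_square_at)
  qed
  define k r where "k = p div L" and "r = p mod L"
  have p: "p = k*L + r" "r < L" using L_pos by (simp_all add: k_def r_def)
  show ?thesis
  proof (cases "r = 0")
    case True
    then have "(k + 2*j)*L \<le> Suc n * L" "n*L < (k + 2*j)*L" using ends late p l by (simp_all add: algebra_simps)
    then have "k + 2*j = Suc n" using L_pos by (metis le_antisym mult_le_cancel2 mult_less_cancel2 Suc_leI)
    moreover have "square_at (code ?u) (k*L + 0) (j*L)" using sq p l True by simp
    ultimately show ?thesis using aligned_square_extension[OF w a] by fastforce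
  next
    case False
    then have "(k + 2*j)*L < Suc n * L" "n*L < Suc (k + 2*j) * L"
      using ends late p l by (simp_all add: algebra_simps)
    then have "k + 2*j = n" by (metis le_antisym less_Suc_eq_le mult_less_cancel2)
    moreover have "square_at (code ?u) (k*L + r) (j*L)" using sq p l by simp
    ultimately show ?thesis using unaligned_square_extension[OF w a] False p(2) by fastforce
  qed
qed

lemma card_square_completions:
  assumes "j \<le> n"
  shows "finite (square_completions n j)" "card (square_completions n j) \<le> K * card (good_words (Suc n - j))"
proof -
  let ?S = "SIGMA P:good_words (Suc n - j). compatible (last P)"
  have fin: "finite ?S" by (intro finite_SigmaI finite_good_words) (simp add: compatible_def)
  then show "finite (square_completions n j)" by (simp add: square_completions_def)
  have "card (square_completions n j) \<le> card ?S"
    unfolding square_completions_def using fin by (rule card_image_le)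
  also have "\<dots> = (\<Sum>P\<in>good_words (Suc n - j). card (compatible (last P)))"
    by (rule card_SigmaI) (simp_all add: finite_good_words compatible_def)
  also have "\<dots> \<le> (\<Sum>P\<in>good_words (Suc n - j). K)"
  proof (rule sum_mono)
    fix P assume P: "P \<in> good_words (Suc n - j)"
    then have "P \<noteq> []" using assms by (auto simp: good_words_def)
    then have "last P < N" using P last_in_set by (auto simp: good_words_def)
    then show "card (compatible (last P)) \<le> K" using card_compatible_le by (simp add: compatible_def)
  qed
  finally show "card (square_completions n j) \<le> K * card (good_words (Suc n - j))" by (simp add: mult.commute)
qed

lemma append_extensions_subset:
  "(\<lambda>(w, a). w @ [a]) ` (SIGMA w:good_words n. extensions w)
    \<subseteq> good_words (Suc n) \<union> (\<Union>j\<in>{2..n}. square_completions n j)"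
proof
  fix x assume "x \<in> (\<lambda>(w, a). w @ [a]) ` (SIGMA w:good_words n. extensions w)"
  then obtain w a where wa: "w \<in> good_words n" "a \<in> extensions w" and x: "x = w @ [a]" by auto
  show "x \<in> good_words (Suc n) \<union> (\<Union>j\<in>{2..n}. square_completions n j)"
  proof (cases "square_free (code (w @ [a]))")
    case True
    then show ?thesis using append_extension[OF wa] wa x by (auto simp: good_words_def)
  next
    case False
    then show ?thesis using non_square_free_extension[OF wa] x by blast
  qed
qed

lemma card_good_words_Suc:
  "deg * card (good_words n)
    \<le> card (good_words (Suc n)) + K * (\<Sum>j=2..n. card (good_words (Suc n - j)))"
proof -
  let ?S = "SIGMA w:good_words n. extensions w"
  have "deg * card (good_words n) = (\<Sum>w\<in>good_words n. deg)" by simp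
  also have "\<dots> \<le> (\<Sum>w\<in>good_words n. card (extensions w))"
    using card_extensions by (intro sum_mono) simp
  also have "\<dots> = card ?S"
    using finite_good_words card_extensions by (intro card_SigmaI[symmetric]) auto
  also have "\<dots> = card ((\<lambda>(w, a). w @ [a]) ` ?S)"
    by (rule card_image[symmetric]) (auto simp: inj_on_def)
  also have "\<dots> \<le> card (good_words (Suc n) \<union> (\<Union>j\<in>{2..n}. square_completions n j))"
    by (rule card_mono[OF _ append_extensions_subset])
       (use finite_good_words card_square_completions in auto)
  also have "\<dots> \<le> card (good_words (Suc n)) + card (\<Union>j\<in>{2..n}. square_completions n j)"
    by (rule card_Un_le)
  also have "card (\<Union>j\<in>{2..n}. square_completions n j) \<le> (\<Sum>j=2..n. card (square_completions n j))"
    by (rule card_UN_le) simp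
  also have "\<dots> \<le> (\<Sum>j=2..n. K * card (good_words (Suc n - j)))"
    using card_square_completions by (intro sum_mono) simp
  finally show ?thesis by (simp add: sum_distrib_left)
qed

lemma card_good_words_Suc_ge:
  fixes \<beta> :: real
  assumes \<beta>: "1 < \<beta>" "\<beta> \<le> real deg - real K / (\<beta> - 1)"
  shows "\<beta> * card (good_words n) \<le> card (good_words (Suc n))"
proof (induction n rule: less_induct)
  case (less n)
  define c where "c i = real (card (good_words i))" for i
  have "(\<Sum>j=2..n. c (Suc n - j)) \<le> c n / (\<beta> - 1)"
    using less.IH \<beta>(1) by (intro geometric_tail_le) (simp_all add: c_def)
  then have tail: "real K * (\<Sum>j=2..n. c (Suc n - j)) \<le> real K * (c n / (\<beta> - 1))"
    by (rule mult_left_mono) simp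
  have "real deg * c n \<le> c (Suc n) + real K * (\<Sum>j=2..n. c (Suc n - j))"
    using card_good_words_Suc[of n] unfolding c_def
    by (simp flip: of_nat_mult of_nat_add of_nat_sum of_nat_le_iff)
  moreover have "\<beta> * c n \<le> (real deg - real K / (\<beta> - 1)) * c n"
    using \<beta>(2) by (rule mult_right_mono) (simp add: c_def)
  ultimately show ?case using tail unfolding c_def by (simp add: algebra_simps)
qed

lemma sqfree_count_ge_power:
  fixes \<beta> :: real
  assumes "1 < \<beta>" "\<beta> \<le> real deg - real K / (\<beta> - 1)"
  shows "\<beta>^n \<le> real (sqfree_count (n*L))"
proof -
  have "\<beta>^n \<le> real (card (good_words n))"
  proof (induction n)
    case (Suc n)
    then have "\<beta>^Suc n \<le> \<beta> * real (card (good_words n))" using assms(1) by simp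
    also have "\<dots> \<le> real (card (good_words (Suc n)))" by (rule card_good_words_Suc_ge[OF assms])
    finally show ?case .
  qed (simp add: good_words_0)
  also have "\<dots> \<le> real (sqfree_count (n*L))" using card_good_words_le by simp
  finally show ?thesis .
qed

end

text \<open>
  The conditional (rather than a conjunction) keeps the simplifier from evaluating the recursive
  call once two letters differ.
\<close>

fun prefix_eq :: "nat \<Rightarrow> 'a list \<Rightarrow> 'a list \<Rightarrow> bool" where
  "prefix_eq 0 xs ys = True"
| "prefix_eq (Suc k) (x#xs) (y#ys) = (if x = y then prefix_eq k xs ys else False)"
| "prefix_eq (Suc k) [] ys = False"
| "prefix_eq (Suc k) xs [] = False"

lemma prefix_eq_iff:
  "prefix_eq n xs ys \<longleftrightarrow> n \<le> length xs \<and> n \<le> length ys \<and> take n xs = take n ys"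
  by (induction n xs ys rule: prefix_eq.induct) auto

text \<open>
  In centered_check R A S k, rev R is the part of a word before a centre and S the part after it.
  Moving the letters of R one at a time to the front of A (initially S), it checks that the
  k + 1 letters before the centre differ from the k + 1 letters after it.
\<close>

fun centered_check :: "'a list \<Rightarrow> 'a list \<Rightarrow> 'a list \<Rightarrow> nat \<Rightarrow> bool" where
  "centered_check [] A S k = True"
| "centered_check (r#R) A S k = (\<not> prefix_eq (Suc k) (r#A) S \<and> centered_check R (r#A) S (Suc k))"

lemma centered_check_Nil: "centered_check R A [] k"
  by (induction R arbitrary: A k) auto

lemma centered_check_sound:
  "centered_check R A S k \<Longrightarrow> i < length R
    \<Longrightarrow> \<not> prefix_eq (Suc (k+i)) (rev (take (Suc i) R) @ A) S"
proof (induction R arbitrary: A k i)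
  case (Cons r R)
  then show ?case by (cases i) (auto dest: Cons.IH[of "r#A" "Suc k"])
qed simp

definition no_square_centered_at :: "'a list \<Rightarrow> nat \<Rightarrow> bool" where
  "no_square_centered_at w c \<longleftrightarrow> centered_check (rev (take c w)) (drop c w) (drop c w) 0"

lemma no_square_centered_at_sound:
  assumes "no_square_centered_at w c" "l \<le> c"
  shows "\<not> square_at w (c - l) l"
proof
  assume sq: "square_at w (c - l) l"
  then have l: "0 < l" "c + l \<le> length w" using assms(2) by (auto simp: square_at_def)
  have "\<not> prefix_eq l (rev (take l (rev (take c w))) @ drop c w) (drop c w)"
    using centered_check_sound[of "rev (take c w)" "drop c w" "drop c w" 0 "l - 1"] assms l
    by (simp add: no_square_centered_at_def)
  moreover have "rev (take l (rev (take c w))) @ drop c w = drop (c - l) w"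
  proof -
    have lc: "l + (c - l) = c" using assms(2) by simp
    have "drop (c - l) w = take l (drop (c - l) w) @ drop l (drop (c - l) w)"
      by (rule append_take_drop_id[symmetric])
    also have "\<dots> = drop (c - l) (take c w) @ drop c w" by (simp only: take_drop drop_drop lc)
    also have "drop (c - l) (take c w) = rev (take l (rev (take c w)))" using l by (simp add: take_rev)
    finally show ?thesis by simp
  qed
  moreover have "take l (drop (c - l) w) = take l (drop c w)"
    using sq assms(2) by (intro nth_equalityI) (auto simp: square_at_def)
  ultimately show False using l by (simp add: prefix_eq_iff) linarith
qed

fun centers_check :: "nat \<Rightarrow> 'a list \<Rightarrow> 'a list \<Rightarrow> bool" where
  "centers_check 0 R S = True"
| "centers_check (Suc n) R [] = True"
| "centers_check (Suc n) R (x#S) = (centered_check R (x#S) (x#S) 0 \<and> centers_check n (x#R) S)"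

lemma centers_check_sound:
  "centers_check n R S \<Longrightarrow> c < n \<Longrightarrow> c \<le> length S
    \<Longrightarrow> centered_check (rev (take c S) @ R) (drop c S) (drop c S) 0"
proof (induction n R S arbitrary: c rule: centers_check.induct)
  case (2 n R)
  then show ?case by (simp add: centered_check_Nil)
next
  case (3 n R x S)
  then show ?case by (cases c) auto
qed simp

definition no_square_centered_from :: "'a list \<Rightarrow> nat \<Rightarrow> nat \<Rightarrow> bool" where
  "no_square_centered_from w a n \<longleftrightarrow> centers_check n (rev (take a w)) (drop a w)"

lemma no_square_centered_from_sound:
  assumes "no_square_centered_from w a n" "c < n" "a + c \<le> length w"
  shows "no_square_centered_at w (a + c)"
proof -
  have "centered_check (rev (take c (drop a w)) @ rev (take a w)) (drop c (drop a w)) (drop c (drop a w)) 0"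
    using centers_check_sound[of n "rev (take a w)" "drop a w" c] assms
    by (simp add: no_square_centered_from_def del: drop_drop)
  moreover have "rev (take c (drop a w)) @ rev (take a w) = rev (take (a + c) w)" by (simp add: take_add)
  ultimately show ?thesis by (simp add: no_square_centered_at_def add.commute)
qed

lemma square_free_if_no_square_centered:
  assumes "no_square_centered_from w 0 (Suc (length w))"
  shows "square_free w"
  unfolding square_free_iff_no_square_at
proof
  assume "\<exists>p l. square_at w p l"
  then obtain p l where sq: "square_at w p l" by blast
  then have "p + l < Suc (length w)" by (simp add: square_at_def)
  then have "no_square_centered_at w (p + l)" using no_square_centered_from_sound[OF assms] by simp
  then show False using no_square_centered_at_sound[of w "p + l" l] sq by simp
qed

fun no_occurrence :: "'a list \<Rightarrow> 'a list \<Rightarrow> bool" where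
  "no_occurrence M [] = True"
| "no_occurrence M (x#xs) = (\<not> prefix_eq (length M) M (x#xs) \<and> no_occurrence M xs)"

lemma no_occurrence_sound:
  "no_occurrence M xs \<Longrightarrow> p < length xs \<Longrightarrow> take (length M) (drop p xs) \<noteq> M"
proof (induction xs arbitrary: p)
  case (Cons x xs)
  then show ?case
    by (cases p) (auto simp: prefix_eq_iff dest: arg_cong[of _ _ length])
qed simp

fun check_below :: "(nat \<Rightarrow> bool) \<Rightarrow> nat \<Rightarrow> bool" where
  "check_below P 0 = True"
| "check_below P (Suc n) = (P n \<and> check_below P n)"

lemma check_below_numeral [simp]: "check_below P (numeral k) = (P (pred_numeral k) \<and> check_below P (pred_numeral k))"
  by (simp add: numeral_eq_Suc)

lemma check_below_iff: "check_below P n \<longleftrightarrow> (\<forall>i<n. P i)"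
  by (induction n) (auto simp: less_Suc_eq)

section \<open>The certificate\<close>

definition blocks :: "nat list list" where
  "blocks =
    [[0,1,2,0,2,1,0,2,0,1,0,2,1,2,0,1,0,2,0,1,2,1,0,2,0,1,0,2,1],
     [0,1,2,0,2,1,0,2,0,1,0,2,1,2,0,1,2,1,0,2,0,1,0,2,1,2,0,2,1],
     [0,1,2,0,2,1,2,0,1,0,2,0,1,2,1,0,1,2,0,1,0,2,1,0,1,2,1,0,2],
     [0,1,2,0,2,1,2,0,1,0,2,0,1,2,1,0,1,2,0,1,0,2,1,2,0,2,1,0,2],
     [0,1,2,0,2,1,2,0,1,0,2,0,1,2,1,0,2,0,1,0,2,1,0,1,2,0,1,0,2],
     [0,1,2,0,2,1,2,0,1,0,2,0,1,2,1,0,2,0,1,0,2,1,2,0,1,2,1,0,2],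
     [0,1,2,0,2,1,2,0,1,0,2,0,1,2,1,0,2,1,2,0,2,1,0,1,2,0,1,0,2],
     [0,1,2,0,2,1,2,0,1,0,2,0,1,2,1,0,2,1,2,0,2,1,0,2,0,1,0,2,1],
     [0,1,2,0,2,1,2,0,1,0,2,1,0,1,2,1,0,2,0,1,2,1,0,1,2,0,1,0,2],
     [0,1,2,0,2,1,2,0,1,0,2,1,0,1,2,1,0,2,1,2,0,2,1,0,1,2,1,0,2],
     [0,1,2,0,2,1,2,0,1,0,2,1,0,1,2,1,0,2,1,2,0,2,1,0,2,0,1,2,1],
     [0,1,2,0,2,1,2,0,1,0,2,1,2,0,2,1,0,1,2,0,1,0,2,1,2,0,1,2,1],
     [0,1,2,0,2,1,2,0,1,0,2,1,2,0,2,1,0,1,2,1,0,2,1,2,0,1,0,2,1],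
     [0,1,2,0,2,1,2,0,1,0,2,1,2,0,2,1,0,1,2,1,0,2,1,2,0,2,1,0,2],
     [0,1,2,0,2,1,2,0,1,0,2,1,2,0,2,1,0,2,0,1,0,2,1,0,1,2,1,0,2],
     [0,1,2,0,2,1,2,0,1,0,2,1,2,0,2,1,0,2,0,1,2,1,0,1,2,0,1,0,2],
     [0,1,2,0,2,1,2,0,1,0,2,1,2,0,2,1,0,2,0,1,2,1,0,2,1,2,0,2,1],
     [0,1,2,0,2,1,2,0,1,2,1,0,1,2,0,1,0,2,1,0,1,2,1,0,2,0,1,2,1],
     [0,1,2,0,2,1,2,0,1,2,1,0,1,2,0,1,0,2,1,2,0,2,1,0,1,2,1,0,2],
     [0,1,2,0,2,1,2,0,1,2,1,0,1,2,0,1,0,2,1,2,0,2,1,0,2,0,1,2,1],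
     [0,1,2,0,2,1,2,0,1,2,1,0,2,0,1,0,2,1,0,1,2,0,1,0,2,0,1,2,1],
     [0,1,2,0,2,1,2,0,1,2,1,0,2,0,1,0,2,1,2,0,2,1,0,1,2,0,1,0,2],
     [0,1,2,0,2,1,2,0,1,2,1,0,2,0,1,0,2,1,2,0,2,1,0,2,0,1,0,2,1],
     [0,1,2,0,2,1,2,0,1,2,1,0,2,1,2,0,2,1,0,1,2,1,0,2,0,1,0,2,1],
     [0,1,2,0,2,1,2,0,1,2,1,0,2,1,2,0,2,1,0,2,0,1,0,2,1,2,0,2,1]]"

definition successors :: "nat list list" where
  "successors =
    [[2,3,5,6,7,8,9,10,11,13,14,15,16,17,18,19,20,21,22,23,24],
     [2,3,4,5,6,7,8,9,10,11,12,13,14,15,16,17,18,19,20,22,23],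
     [0,1,4,5,6,7,8,9,10,11,12,15,16,17,18,19,20,21,22,23,24],
     [2,4,5,6,7,8,9,10,11,12,14,15,16,17,18,19,20,21,22,23,24],
     [0,1,2,3,8,9,10,11,12,13,14,15,16,17,18,19,20,21,22,23,24],
     [0,1,2,3,6,8,9,10,11,12,14,15,16,17,18,19,20,21,22,23,24],
     [0,1,2,3,8,9,10,11,12,13,14,15,16,17,18,19,20,21,22,23,24],
     [0,1,2,3,4,5,8,9,10,11,13,14,15,16,17,18,19,20,21,23,24],
     [0,1,2,3,4,5,6,7,11,12,13,14,16,17,18,19,20,21,22,23,24],
     [0,1,2,3,4,5,6,7,11,12,14,15,16,17,18,19,20,21,22,23,24],
     [0,1,2,3,4,5,6,7,11,12,13,14,15,17,18,19,20,21,22,23,24],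
     [0,1,2,3,4,5,6,7,8,9,10,12,13,14,15,16,20,21,22,23,24],
     [0,1,2,3,4,5,6,7,11,13,14,15,16,17,18,19,20,21,22,23,24],
     [2,4,5,6,7,8,9,10,11,12,14,15,16,17,18,19,20,21,22,23,24],
     [0,1,2,3,4,5,6,7,8,9,10,11,12,17,18,19,20,21,22,23,24],
     [0,1,2,3,4,5,6,7,8,9,10,11,12,17,18,19,20,21,22,23,24],
     [2,3,4,5,6,7,8,9,10,11,12,13,14,17,18,19,20,21,22,23,24],
     [0,1,2,3,4,5,6,7,8,9,10,11,12,13,14,15,16,20,21,22,23],
     [0,1,2,3,4,5,6,7,8,9,10,11,12,14,15,16,20,21,22,23,24],
     [0,1,2,3,4,5,6,7,8,9,10,11,12,13,14,15,16,20,21,22,23],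
     [0,1,2,3,4,5,6,7,8,9,10,11,12,13,14,15,16,17,18,19,23],
     [0,1,2,3,4,5,7,8,9,10,11,12,13,14,15,16,17,18,19,23,24],
     [0,1,2,3,4,5,6,8,9,10,11,13,14,15,16,17,18,19,20,23,24],
     [0,1,2,3,4,5,6,7,8,9,10,11,13,14,15,16,17,18,19,20,21],
     [2,3,4,5,6,7,8,9,10,11,12,13,14,15,16,17,18,19,20,21,22]]"

text \<open>
  lcp_bounds!y bounds the common prefix of block y with its successors; it splits the
  condition lcs_lcp_lt of block_code into conditions on single edges.
\<close>

definition lcp_bounds :: "nat list" where
  "lcp_bounds = [6,6,16,23,16,17,16,17,12,12,12,19,25,25,17,17,20,12,12,12,13,13,18,13,13]"

definition lcs_bounds :: "nat list" where
  "lcs_bounds = [11,13,12,10,10,6,15,15,15,14,14,5,6,10,12,15,8,8,14,14,7,15,15,11,13]"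

definition block_ok :: "nat list \<Rightarrow> bool" where
  "block_ok v \<longleftrightarrow> length v = 29 \<and> take 5 v = [0,1,2,0,2] \<and> set v \<subseteq> {0,1,2}
     \<and> no_occurrence [0,1,2,0,2] (tl (v @ [0,1,2,0]))
     \<and> no_square_centered_from (v @ [0,1,2,0]) 0 34"

text \<open>
  The centres 30, ..., 33 are the positions L + d, 0 < d < q, of no_square_across.
\<close>

definition edge_ok :: "nat \<Rightarrow> nat \<Rightarrow> bool" where
  "edge_ok x y \<longleftrightarrow> y < 25 \<and> y \<noteq> x
     \<and> no_square_centered_from (blocks!x @ blocks!y @ [0,1,2,0]) 30 4
     \<and> lcs (blocks!x) (blocks!y) + lcp_bounds!y < 29 \<and> lcp (blocks!x) (blocks!y) \<le> lcp_bounds!x"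

definition edges_ok :: "nat \<Rightarrow> bool" where
  "edges_ok x \<longleftrightarrow> list_all (edge_ok x) (successors!x)"

lemma edges_ok_0_to_4: "edges_ok 0" "edges_ok 1" "edges_ok 2" "edges_ok 3" "edges_ok 4"
  by code_simp+

lemma edges_ok_5_to_9: "edges_ok 5" "edges_ok 6" "edges_ok 7" "edges_ok 8" "edges_ok 9"
  by code_simp+

lemma edges_ok_10_to_14: "edges_ok 10" "edges_ok 11" "edges_ok 12" "edges_ok 13" "edges_ok 14"
  by code_simp+

lemma edges_ok_15_to_19: "edges_ok 15" "edges_ok 16" "edges_ok 17" "edges_ok 18" "edges_ok 19"
  by code_simp+

lemma edges_ok_20_to_24: "edges_ok 20" "edges_ok 21" "edges_ok 22" "edges_ok 23" "edges_ok 24"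
  by code_simp+

lemma length_blocks: "length blocks = 25"
  by (simp add: blocks_def)

lemma length_successors: "length successors = 25"
  by (simp add: successors_def)

lemma blocks_ok: "list_all block_ok blocks"
  by code_simp

lemma distinct_blocks: "distinct blocks"
  by (simp add: blocks_def)

lemma successors_ok: "list_all (\<lambda>g. distinct g \<and> 21 \<le> length g) successors"
  by (simp add: successors_def)

lemma lcs_bounds_ok:
  "check_below (\<lambda>x. check_below (\<lambda>y. x = y \<or> lcs (blocks!x) (blocks!y) \<le> lcs_bounds!y) 25) 25"
  by code_simp

lemma prefix_classes_ok:
  "check_below (\<lambda>y.
     length (filter (\<lambda>v. take (29 - lcs_bounds!y) v = take (29 - lcs_bounds!y) (blocks!y)) blocks)
     \<le> 6) 25"
  by code_simp

lemma edge_ok_at: "x < 25 \<Longrightarrow> y \<in> set (successors!x) \<Longrightarrow> edge_ok x y"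
proof -
  assume "x < 25" "y \<in> set (successors!x)"
  moreover have "check_below edges_ok 25"
    using edges_ok_0_to_4 edges_ok_5_to_9 edges_ok_10_to_14 edges_ok_15_to_19 edges_ok_20_to_24 by simp
  ultimately show "edge_ok x y" by (auto simp: check_below_iff edges_ok_def list_all_iff)
qed

lemma block_ok_at: "i < 25 \<Longrightarrow> block_ok (blocks!i)"
  using blocks_ok length_blocks by (simp add: list_all_length)

lemma block_code_blocks: "block_code blocks successors lcs_bounds 29 5 21 6 [0,1,2,0,2]"
proof (unfold_locales, unfold length_blocks)
  fix i :: nat assume "i < 25"
  then have ok: "block_ok (blocks!i)" by (rule block_ok_at)
  then show "length (blocks!i) = 29" "set (blocks!i) \<subseteq> {0,1,2}" "take 5 (blocks!i) = [0,1,2,0,2]"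
    by (simp_all add: block_ok_def)
  show "square_free (blocks!i @ butlast [0,1,2,0,2])"
    using ok square_free_if_no_square_centered[of "blocks!i @ [0,1,2,0]"] by (simp add: block_ok_def)
  fix p :: nat assume p: "0 < p" "p < 29"
  have "take (length [0,1,2,0,2::nat]) (drop (p - 1) (tl (blocks!i @ [0,1,2,0]))) \<noteq> [0,1,2,0,2]"
    using ok p by (intro no_occurrence_sound) (simp_all add: block_ok_def)
  moreover have "drop (p - 1) (tl xs) = drop p xs" for xs :: "nat list"
    using p by (cases p) (simp_all add: drop_Suc)
  moreover have "length [0,1,2,0,2::nat] = 5" "butlast [0,1,2,0,2::nat] = [0,1,2,0]" by simp_all
  ultimately show "take 5 (drop p (blocks!i @ butlast [0,1,2,0,2])) \<noteq> [0,1,2,0,2]"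
    by (simp only: not_False_eq_True)
next
  fix x y :: nat assume xy: "x < 25" "y \<in> set (successors!x)"
  then have ok: "edge_ok x y" by (rule edge_ok_at)
  then have y: "y < 25" "y \<noteq> x" by (simp_all add: edge_ok_def)
  then show "y < 25 \<and> y \<noteq> x" by simp
  have lengths: "length (blocks!x) = 29" "length (blocks!y) = 29"
    using block_ok_at xy(1) y(1) by (simp_all add: block_ok_def)
  fix d l :: nat assume d: "0 < d" "d < 5" "l \<le> 29 + d"
  have "no_square_centered_at (blocks!x @ blocks!y @ [0,1,2,0]) (30 + (d - 1))"
    using ok d lengths by (intro no_square_centered_from_sound[of _ 30 4]) (simp_all add: edge_ok_def)
  then show "\<not> square_at (blocks!x @ blocks!y @ butlast [0,1,2,0,2]) (29 + d - l) l"
    using no_square_centered_at_sound[of _ "29 + d" l] d by simp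
next
  fix x y z :: nat assume "x < 25" "y \<in> set (successors!x)" "z \<in> set (successors!y)"
  then have "edge_ok x y" "edge_ok y z" using edge_ok_at by (auto simp: edge_ok_def)
  then show "lcs (blocks!x) (blocks!y) + lcp (blocks!y) (blocks!z) < 29" by (simp add: edge_ok_def)
next
  fix x :: nat assume "x < 25"
  then show "distinct (successors!x)" "21 \<le> length (successors!x)"
    using successors_ok length_successors by (simp_all add: list_all_length)
next
  fix x y :: nat assume "x < 25" "y < 25" "x \<noteq> y"
  then show "lcs (blocks!x) (blocks!y) \<le> lcs_bounds!y"
    using lcs_bounds_ok by (auto simp: check_below_iff)
next
  fix y :: nat assume "y < 25"
  let ?k = "29 - lcs_bounds!y"
  have "length (filter (\<lambda>v. take ?k v = take ?k (blocks!y)) blocks) \<le> 6"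
    using prefix_classes_ok \<open>y < 25\<close> by (simp add: check_below_iff)
  then show "card {z. z < 25 \<and> take ?k (blocks!z) = take ?k (blocks!y)} \<le> 6"
    by (simp add: length_filter_conv_card length_blocks)
qed (simp_all add: distinct_blocks)

theorem mainTheorem11:
  shows "growth_rate \<ge> 65 powr (1/40) \<and> 65 powr (1/40) > (1.109999 :: real)"
proof
  have "(413/20::real) \<le> real 21 - real 6 / (413/20 - 1)" by simp
  then have "(413/20::real)^n \<le> real (sqfree_count (n * 29))" for n
    using block_code.sqfree_count_ge_power[OF block_code_blocks] by simp
  then have "(413/20::real) powr (1 / real 29) \<le> growth_rate" by (intro growth_rate_ge) simp_all
  moreover have "(65::real) powr (1 / real 40) \<le> (413/20) powr (1 / real 29)"
    by (rule powr_reciprocal_le) (simp_all add: power_divide)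
  ultimately show "growth_rate \<ge> 65 powr (1/40)" by simp
  show "65 powr (1/40) > (1.109999 :: real)" by (rule approx_65_powr_1_40)
qed

end
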